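(* Let $0<q<1$, let $n$ be a positive integer and let $s>1$ be real. Then \[ n\,\zeta[\{s\}^n] = \sum_{k=1}^n (-1)^{k+1}\,\zeta[\{s\}^{n-k}] \sum_{j=0}^{k-1}\binom{k-1}{j}(1-q)^j\,\zeta[ks-j]. \]
   Context: Fix a real number $q$ with $0<q<1$. For real $x$ put $[x]_q := (1-q^x)/(1-q)$ (so $[n]_q=1+q+\cdots+q^{n-1}$ for integers $n\ge 0$). For an integer $m\ge1$ and real numbers $s_1,\dots,s_m$ with $s_1>1$ and $s_j\ge 1$ for $2\le j\le m$, the multiple $q$-zeta function is $\zeta[s_1,\dots,s_m] := \sum_{k_1>k_2>\cdots>k_m>0}\prod_{j=1}^m \frac{q^{(s_j-1)k_j}}{[k_j]_q^{s_j}}$, the sum being over positive integers; for the empty argument list, $\zeta[\,]:=1$. The notation $\{s\}^n$ in an argument list denotes $n$ consecutive copies of $s$ (empty if $n=0$). *)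

theory Defs
  imports "HOL-Analysis.Analysis"
begin

definition qnum :: "real \<Rightarrow> real \<Rightarrow> real" where
  "qnum q x = (1 - q powr x) / (1 - q)"

definition qz_indices :: "nat \<Rightarrow> nat list set" where
  "qz_indices m = {ks. length ks = m \<and> sorted_wrt (>) ks \<and> (\<forall>k\<in>set ks. 0 < k)}"

text \<open>Multiple q-zeta function zeta[s_1,...,s_m] (sum of nonnegative terms);
  zeta[] = 1 since the only index tuple is the empty one.\<close>
definition mqzeta :: "real \<Rightarrow> real list \<Rightarrow> real" where
  "mqzeta q ss = infsum (\<lambda>ks. \<Prod>j<length ss.
       q powr ((ss ! j - 1) * real (ks ! j)) / (qnum q (real (ks ! j))) powr (ss ! j))
     (qz_indices (length ss))"

end

theory Submission
  imports Defs
begin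

text \<open>Cutting all indices off at \<open>N\<close> turns \<open>\<zeta>[{s}\<^sup>m]\<close> into the elementary symmetric
  polynomial \<open>e\<^sub>m\<close> of \<open>x\<^sub>i = q\<^bsup>(s-1)i\<^esup>/[i]\<^sub>q\<^sup>s\<close>, \<open>1 \<le> i \<le> N\<close>, so Newton's identities
  \<open>n e\<^sub>n = \<Sum>\<^sub>k (-1)\<^bsup>k+1\<^esup> e\<^bsub>n-k\<^esub> p\<^sub>k\<close> hold at every truncation level. The power sums
  \<open>p\<^sub>k = \<Sum>\<^sub>i x\<^sub>i\<^sup>k\<close> are truncated single zeta values: expanding
  \<open>1 = ((1-q)[i]\<^sub>q + q\<^sup>i)\<^bsup>k-1\<^esup>\<close> binomially writes \<open>x\<^sub>i\<^sup>k\<close> as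
  \<open>\<Sum>\<^sub>j C(k-1,j) (1-q)\<^sup>j q\<^bsup>(ks-j-1)i\<^esup>/[i]\<^sub>q\<^bsup>ks-j\<^esup>\<close>. As the summands are nonnegative and
  the truncations are bounded, letting \<open>N \<rightarrow> \<infinity>\<close> gives the theorem.\<close>

lemma tendsto_sum_exhausting_infsum:
  fixes f :: "'a \<Rightarrow> 'b :: {conditionally_complete_linorder, ordered_comm_monoid_add, linorder_topology}"
  assumes nonneg: "\<And>x. x \<in> A \<Longrightarrow> 0 \<le> f x"
    and finite: "\<And>N. finite (T N)" and subset: "\<And>N. T N \<subseteq> A" and mono: "mono T"
    and exhaust: "\<And>x. x \<in> A \<Longrightarrow> \<exists>N. x \<in> T N"
    and bounded: "\<And>N. sum f (T N) \<le> B"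
  shows "(\<lambda>N. sum f (T N)) \<longlonglongrightarrow> infsum f A"
proof -
  have cover: "\<forall>\<^sub>F N in sequentially. X \<subseteq> T N" if "finite X" "X \<subseteq> A" for X
  proof -
    have "\<forall>\<^sub>F N in sequentially. x \<in> T N" if "x \<in> A" for x
      using exhaust[OF that] mono by (auto simp: eventually_sequentially mono_def)
    with that show ?thesis
      by (simp add: subset_eq eventually_ball_finite)
  qed
  have "filterlim T (finite_subsets_at_top A) sequentially"
    unfolding filterlim_finite_subsets_at_top
    using cover by (auto elim: eventually_mono simp: finite subset)
  moreover have "f summable_on A"
  proof (rule nonneg_bdd_above_summable_on[OF nonneg])
    show "bdd_above (sum f ` {F. F \<subseteq> A \<and> finite F})"
    proof (rule bdd_aboveI2)
      fix F assume "F \<in> {F. F \<subseteq> A \<and> finite F}"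
      then obtain N where "F \<subseteq> T N" using cover eventually_sequentially by (metis mem_Collect_eq order_refl)
      then have "sum f F \<le> sum f (T N)"
        using subset nonneg by (intro sum_mono2 finite) auto
      then show "sum f F \<le> B" using bounded order_trans by blast
    qed
  qed
  ultimately show ?thesis
    using infsum_tendsto filterlim_compose[of "sum f"] by blast
qed

text \<open>\<open>esym x m N\<close> is the elementary symmetric polynomial \<open>e\<^sub>m(x 1, \<dots>, x N)\<close>.\<close>
fun esym :: "(nat \<Rightarrow> 'a :: comm_semiring_1) \<Rightarrow> nat \<Rightarrow> nat \<Rightarrow> 'a" where
  "esym x 0 N = 1"
| "esym x (Suc m) 0 = 0"
| "esym x (Suc m) (Suc N) = esym x (Suc m) N + x (Suc N) * esym x m N"

lemma esym_one: "esym x 1 N = (\<Sum>i=1..N. x i)"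
  by (induction N) auto

lemma esym_Suc_right:
  "esym x m (Suc N) = esym x m N + (if m = 0 then 0 else x (Suc N) * esym x (m - 1) N)"
  by (cases m) auto

lemma alternating_sum_esym_Suc_right:
  fixes x :: "nat \<Rightarrow> 'a :: comm_ring_1"
  shows "(\<Sum>k=1..Suc m. (-1)^(k+1) * esym x (Suc m - k) (Suc N) * x (Suc N)^k) = x (Suc N) * esym x m N"
proof (induction m)
  case 0
  then show ?case by simp
next
  case (Suc m)
  let ?y = "x (Suc N)"
  have "(\<Sum>k=1..Suc (Suc m). (-1)^(k+1) * esym x (Suc (Suc m) - k) (Suc N) * ?y^k)
      = esym x (Suc m) (Suc N) * ?y + (\<Sum>k=1..Suc m. (-1)^(k+2) * esym x (Suc m - k) (Suc N) * ?y^(k+1))"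
    by (subst sum.atLeast_Suc_atMost, simp, subst sum.shift_bounds_cl_Suc_ivl, simp del: esym.simps)
  also have "(\<Sum>k=1..Suc m. (-1)^(k+2) * esym x (Suc m - k) (Suc N) * ?y^(k+1))
      = - ?y * (\<Sum>k=1..Suc m. (-1)^(k+1) * esym x (Suc m - k) (Suc N) * ?y^k)"
    by (simp add: sum_distrib_left algebra_simps del: esym.simps)
  also have "\<dots> = - ?y * (?y * esym x m N)"
    using Suc by simp
  finally show ?case by (simp add: algebra_simps)
qed

theorem newton_identity_esym:
  fixes x :: "nat \<Rightarrow> 'a :: comm_ring_1"
  shows "of_nat n * esym x n N = (\<Sum>k=1..n. (-1)^(k+1) * esym x (n-k) N * (\<Sum>i=1..N. x i ^ k))"
proof (induction N arbitrary: n)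
  case 0
  then show ?case by (cases n) auto
next
  case (Suc N)
  let ?y = "x (Suc N)" and ?P = "\<lambda>k. \<Sum>i=1..N. x i ^ k"
  show ?case
  proof (cases n)
    case 0
    then show ?thesis by simp
  next
    case (Suc m)
    have split: "esym x (Suc m - k) (Suc N)
        = esym x (Suc m - k) N + (if k \<le> m then ?y * esym x (m - k) N else 0)"
      if "1 \<le> k" "k \<le> Suc m" for k
      using that by (auto simp: esym_Suc_right Suc_diff_le simp del: esym.simps)
    have "(\<Sum>k=1..Suc m. (-1)^(k+1) * esym x (Suc m - k) (Suc N) * ?P k)
        = (\<Sum>k=1..Suc m. (-1)^(k+1) * esym x (Suc m - k) N * ?P k)
          + (\<Sum>k=1..Suc m. if k \<le> m then ?y * ((-1)^(k+1) * esym x (m - k) N * ?P k) else 0)"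
      by (subst sum.distrib[symmetric], rule sum.cong) (auto simp: split algebra_simps simp del: esym.simps)
    also have "\<dots> = (\<Sum>k=1..Suc m. (-1)^(k+1) * esym x (Suc m - k) N * ?P k)
          + ?y * (\<Sum>k=1..m. (-1)^(k+1) * esym x (m - k) N * ?P k)"
      by (simp add: sum_distrib_left del: esym.simps)
    also have "\<dots> = of_nat (Suc m) * esym x (Suc m) N + ?y * (of_nat m * esym x m N)"
      by (simp only: Suc.IH)
    finally have P_part: "(\<Sum>k=1..Suc m. (-1)^(k+1) * esym x (Suc m - k) (Suc N) * ?P k)
        = of_nat (Suc m) * esym x (Suc m) N + ?y * (of_nat m * esym x m N)" .
    have "(\<Sum>k=1..n. (-1)^(k+1) * esym x (n-k) (Suc N) * (\<Sum>i=1..Suc N. x i ^ k))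
        = (\<Sum>k=1..Suc m. (-1)^(k+1) * esym x (Suc m - k) (Suc N) * ?P k)
          + (\<Sum>k=1..Suc m. (-1)^(k+1) * esym x (Suc m - k) (Suc N) * ?y ^ k)"
      by (simp add: Suc sum.distrib[symmetric] algebra_simps del: esym.simps)
    also have "\<dots> = of_nat n * esym x n (Suc N)"
      unfolding P_part alternating_sum_esym_Suc_right by (simp add: Suc algebra_simps)
    finally show ?thesis ..
  qed
qed

lemma esym_le_power_sum:
  fixes x :: "nat \<Rightarrow> 'a :: linordered_semidom"
  assumes "\<And>i. 0 \<le> x i"
  shows "esym x n N \<le> (\<Sum>i=1..N. x i) ^ n"
  using assms
proof (induction x n N rule: esym.induct)
  case (3 x m N)
  define S where "S = (\<Sum>i=1..N. x i)"
  have S: "0 \<le> S" and y: "0 \<le> x (Suc N)"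
    unfolding S_def using 3 by (auto intro: sum_nonneg)
  have "esym x (Suc m) (Suc N) \<le> S ^ Suc m + x (Suc N) * S ^ m"
    using 3 y by (simp add: S_def add_mono mult_left_mono)
  also have "\<dots> \<le> (S + x (Suc N)) * (S + x (Suc N)) ^ m"
    using S y mult_left_mono[OF power_mono[of S "S + x (Suc N)" m], of "S + x (Suc N)"]
    by (simp add: algebra_simps)
  also have "\<dots> = (\<Sum>i=1..Suc N. x i) ^ Suc m"
    by (simp add: S_def)
  finally show ?case .
qed simp_all

definition qz_indices_upto :: "nat \<Rightarrow> nat \<Rightarrow> nat list set" where
  "qz_indices_upto m N = {ks \<in> qz_indices m. \<forall>k\<in>set ks. k \<le> N}"

lemma finite_qz_indices_upto: "finite (qz_indices_upto m N)"
  by (rule finite_subset[OF _ finite_lists_length_eq[OF finite_atMost, of N m]])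
    (auto simp: qz_indices_upto_def qz_indices_def)

lemma qz_indices_upto_0: "qz_indices_upto 0 N = {[]}"
  by (auto simp: qz_indices_upto_def qz_indices_def)

lemma qz_indices_upto_Suc_0: "qz_indices_upto (Suc m) 0 = {}"
  by (force simp: qz_indices_upto_def qz_indices_def length_Suc_conv)

lemma qz_indices_upto_Suc_Suc:
  "qz_indices_upto (Suc m) (Suc N) = qz_indices_upto (Suc m) N \<union> Cons (Suc N) ` qz_indices_upto m N"
proof (intro equalityI subsetI)
  fix ks assume ks_in: "ks \<in> qz_indices_upto (Suc m) (Suc N)"
  then obtain k rest where ks: "ks = k # rest" and len: "length rest = m"
    and below: "\<forall>y\<in>set rest. y < k" and sorted: "sorted_wrt (>) rest"
    and pos: "0 < k" "\<forall>y\<in>set rest. 0 < y" and k: "k \<le> Suc N"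
    by (cases ks) (auto simp: qz_indices_upto_def qz_indices_def)
  show "ks \<in> qz_indices_upto (Suc m) N \<union> Cons (Suc N) ` qz_indices_upto m N"
  proof (cases "k = Suc N")
    case True
    then have "rest \<in> qz_indices_upto m N"
      using below sorted pos len by (force simp: qz_indices_upto_def qz_indices_def)
    then show ?thesis using ks True by auto
  next
    case False
    with k below have "\<forall>y\<in>set ks. y \<le> N" by (force simp: ks)
    with ks_in show ?thesis by (auto simp: qz_indices_upto_def)
  qed
qed (auto simp: qz_indices_upto_def qz_indices_def le_SucI less_Suc_eq_le)

lemma esym_eq_sum_qz_indices_upto:
  "esym x m N = (\<Sum>ks\<in>qz_indices_upto m N. prod_list (map x ks))"
proof (induction x m N rule: esym.induct)
  case (3 x m N)
  have disjoint: "qz_indices_upto (Suc m) N \<inter> Cons (Suc N) ` qz_indices_upto m N = {}"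
    by (auto simp: qz_indices_upto_def)
  have "(\<Sum>ks\<in>qz_indices_upto (Suc m) (Suc N). prod_list (map x ks))
      = (\<Sum>ks\<in>qz_indices_upto (Suc m) N. prod_list (map x ks))
        + (\<Sum>ks\<in>Cons (Suc N) ` qz_indices_upto m N. prod_list (map x ks))"
    unfolding qz_indices_upto_Suc_Suc
    by (intro sum.union_disjoint finite_qz_indices_upto finite_imageI disjoint)
  also have "(\<Sum>ks\<in>Cons (Suc N) ` qz_indices_upto m N. prod_list (map x ks))
      = x (Suc N) * (\<Sum>ks\<in>qz_indices_upto m N. prod_list (map x ks))"
    by (subst sum.reindex) (auto simp: sum_distrib_left)
  finally show ?case using 3 by simp
qed (simp_all add: qz_indices_upto_0 qz_indices_upto_Suc_0)

definition qzeta_term :: "real \<Rightarrow> real \<Rightarrow> nat \<Rightarrow> real" where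
  "qzeta_term q a i = q powr ((a - 1) * real i) / qnum q (real i) powr a"

lemma mqzeta_replicate:
  "mqzeta q (replicate n a) = infsum (\<lambda>ks. prod_list (map (qzeta_term q a) ks)) (qz_indices n)"
  unfolding mqzeta_def length_replicate
proof (rule infsum_cong)
  fix ks assume "ks \<in> qz_indices n"
  then have "length ks = n" by (simp add: qz_indices_def)
  then show "(\<Prod>j<n. q powr ((replicate n a ! j - 1) * real (ks ! j)) /
      qnum q (real (ks ! j)) powr (replicate n a ! j)) = prod_list (map (qzeta_term q a) ks)"
    by (simp add: prod.list_conv_set_nth atLeast0LessThan qzeta_term_def)
qed

context
  fixes q :: real
  assumes q_pos: "0 < q" and q_less_1: "q < 1"
begin

lemma qnum_ge_1:
  assumes "1 \<le> i"
  shows "1 \<le> qnum q (real i)"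
proof -
  have "q ^ i \<le> q ^ 1"
    using q_pos q_less_1 assms by (intro power_decreasing) auto
  then show ?thesis
    using q_pos q_less_1 unfolding qnum_def by (simp add: powr_realpow field_simps)
qed

lemma qzeta_term_nonneg: "0 \<le> qzeta_term q a i"
  using q_pos q_less_1 unfolding qzeta_term_def qnum_def by (simp add: powr_realpow power_le_one)

lemma qzeta_term_le_power:
  assumes "1 < a" "1 \<le> i"
  shows "qzeta_term q a i \<le> (q powr (a - 1)) ^ i"
proof -
  have "q powr ((a - 1) * real i) = (q powr (a - 1)) ^ i"
    using q_pos by (simp add: powr_powr[symmetric] powr_realpow)
  moreover have "1 \<le> qnum q (real i) powr a"
    using qnum_ge_1[OF assms(2)] assms(1) by (intro ge_one_powr_ge_zero) auto
  ultimately show ?thesis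
    unfolding qzeta_term_def by (simp add: divide_le_eq mult_le_cancel_left1)
qed

lemma sum_qzeta_term_le:
  assumes "1 < a"
  shows "(\<Sum>i=1..N. qzeta_term q a i) \<le> 1 / (1 - q powr (a - 1))"
proof -
  define r where "r = q powr (a - 1)"
  have r: "0 < r" "r < 1"
    unfolding r_def using q_pos q_less_1 assms powr_less_mono2[of "a - 1" q 1] by auto
  have "(\<Sum>i=1..N. qzeta_term q a i) \<le> (\<Sum>i=1..N. r ^ i)"
    using qzeta_term_le_power[OF assms] by (intro sum_mono) (auto simp: r_def)
  also have "\<dots> \<le> (\<Sum>i<Suc N. r ^ i)"
    using r by (intro sum_mono2) auto
  also have "\<dots> = (1 - r ^ Suc N) / (1 - r)"
    using r by (subst sum_gp_strict) simp
  also have "\<dots> \<le> 1 / (1 - r)"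
    using r by (intro divide_right_mono) auto
  finally show ?thesis by (simp add: r_def)
qed

lemma esym_qzeta_term_tendsto_mqzeta:
  assumes "1 < a"
  shows "(\<lambda>N. esym (qzeta_term q a) n N) \<longlonglongrightarrow> mqzeta q (replicate n a)"
  unfolding esym_eq_sum_qz_indices_upto mqzeta_replicate
proof (rule tendsto_sum_exhausting_infsum)
  show "0 \<le> prod_list (map (qzeta_term q a) ks)" for ks
    using qzeta_term_nonneg by (intro prod_list_nonneg) auto
  show "mono (qz_indices_upto n)"
    by (auto simp: mono_def qz_indices_upto_def)
  show "\<exists>N. ks \<in> qz_indices_upto n N" if "ks \<in> qz_indices n" for ks
    using that member_le_sum_list by (auto simp: qz_indices_upto_def)
  show "(\<Sum>ks\<in>qz_indices_upto n N. prod_list (map (qzeta_term q a) ks))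
      \<le> (1 / (1 - q powr (a - 1))) ^ n" for N
    unfolding esym_eq_sum_qz_indices_upto[symmetric]
    by (intro order_trans[OF esym_le_power_sum power_mono] sum_qzeta_term_le assms sum_nonneg
        qzeta_term_nonneg)
  show "finite (qz_indices_upto n N)" for N
    by (rule finite_qz_indices_upto)
  show "qz_indices_upto n N \<subseteq> qz_indices n" for N
    by (auto simp: qz_indices_upto_def)
qed

text \<open>Multiply the \<open>k\<close>-th power by the binomial expansion of
  \<open>1 = ((1 - q) [i]\<^sub>q + q\<^sup>i)\<^bsup>k-1\<^esup>\<close>.\<close>
lemma qzeta_term_power:
  assumes "1 \<le> i" "1 \<le> k"
  shows "qzeta_term q s i ^ k
    = (\<Sum>j=0..k-1. real ((k-1) choose j) * (1-q)^j * qzeta_term q (real k * s - real j) i)"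
proof -
  define Q where "Q = qnum q (real i)"
  define u where "u = q ^ i"
  define c where "c = q powr ((real k * s - real k) * real i) / Q powr (real k * s)"
  have Q: "0 < Q"
    using qnum_ge_1[OF assms(1)] by (simp add: Q_def)
  have q_powr_i: "q powr real i = u"
    using q_pos by (simp add: u_def powr_realpow)
  have Q_u: "(1 - q) * Q + u = 1"
    using q_less_1 by (simp add: Q_def qnum_def q_powr_i)
  have u_power: "u ^ m = q powr (real m * real i)" for m
    using q_pos by (simp add: u_def powr_powr mult.commute flip: powr_realpow)
  have term_j: "qzeta_term q (real k * s - real j) i = c * (u ^ (k - 1 - j) * Q ^ j)"
    if "j \<le> k - 1" for j
  proof -
    have "real (k - 1 - j) = real k - 1 - real j"
      using that assms(2) by (simp add: of_nat_diff)
    then have "q powr ((real k * s - real j - 1) * real i)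
        = q powr ((real k * s - real k) * real i) * u ^ (k - 1 - j)"
      by (simp add: u_power powr_add[symmetric] algebra_simps)
    moreover have "Q powr (real k * s - real j) = Q powr (real k * s) / Q ^ j"
      using Q by (simp add: powr_diff powr_realpow)
    ultimately show ?thesis
      using Q by (simp add: qzeta_term_def Q_def[symmetric] c_def field_simps)
  qed
  have "qzeta_term q s i ^ k = c"
    using q_pos Q
    by (simp add: qzeta_term_def c_def Q_def[symmetric] power_divide powr_realpow[symmetric] powr_powr
        algebra_simps)
  also have "\<dots> = c * ((1 - q) * Q + u) ^ (k - 1)"
    by (simp add: Q_u)
  also have "\<dots> = (\<Sum>j\<le>k-1. c * (real ((k-1) choose j) * ((1 - q) * Q) ^ j * u ^ (k - 1 - j)))"
    by (simp add: binomial_ring sum_distrib_left)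
  also have "\<dots> = (\<Sum>j=0..k-1. real ((k-1) choose j) * (1-q)^j * qzeta_term q (real k * s - real j) i)"
    by (intro sum.cong) (auto simp: term_j power_mult_distrib)
  finally show ?thesis .
qed

lemma qzeta_newton_identity_truncated:
  "real n * esym (qzeta_term q s) n N
    = (\<Sum>k=1..n. (-1)^(k+1) * esym (qzeta_term q s) (n-k) N *
        (\<Sum>j=0..k-1. real ((k-1) choose j) * (1-q)^j * esym (qzeta_term q (real k * s - real j)) 1 N))"
proof -
  have "(\<Sum>i=1..N. qzeta_term q s i ^ k)
      = (\<Sum>j=0..k-1. real ((k-1) choose j) * (1-q)^j * esym (qzeta_term q (real k * s - real j)) 1 N)"
    if "1 \<le> k" for k
    using that unfolding esym_one
    by (simp add: qzeta_term_power sum_distrib_left) (rule sum.swap)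
  then show ?thesis
    by (simp add: newton_identity_esym)
qed

end

theorem theorem2p1:
  fixes q s :: real and n :: nat
  assumes "0 < q" and "q < 1" and "0 < n" and "1 < s"
  shows "real n * mqzeta q (replicate n s) =
    (\<Sum>k=1..n. (-1) ^ (k + 1) * mqzeta q (replicate (n - k) s) *
       (\<Sum>j=0..k-1. real ((k - 1) choose j) * (1 - q) ^ j * mqzeta q [real k * s - real j]))"
proof -
  note q = assms(1,2)
  have exponent_gt_1: "1 < real k * s - real j" if "1 \<le> k" "j \<le> k - 1" for k j
  proof -
    have "real j \<le> real k - 1"
      using that by (simp add: of_nat_diff)
    moreover have "real k * 1 < real k * s"
      using that assms(4) by (intro mult_strict_left_mono) auto
    ultimately show ?thesis by linarith
  qed
  have lhs: "(\<lambda>N. real n * esym (qzeta_term q s) n N) \<longlonglongrightarrow> real n * mqzeta q (replicate n s)"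
    by (intro tendsto_mult_left esym_qzeta_term_tendsto_mqzeta q assms(4))
  have single: "(\<lambda>N. esym (qzeta_term q (real k * s - real j)) 1 N)
      \<longlonglongrightarrow> mqzeta q [real k * s - real j]"
    if "1 \<le> k" "j \<le> k - 1" for k j
    using esym_qzeta_term_tendsto_mqzeta[OF q exponent_gt_1[OF that], of 1] by simp
  have rhs: "(\<lambda>N. real n * esym (qzeta_term q s) n N) \<longlonglongrightarrow>
      (\<Sum>k=1..n. (-1) ^ (k + 1) * mqzeta q (replicate (n - k) s) *
       (\<Sum>j=0..k-1. real ((k - 1) choose j) * (1 - q) ^ j * mqzeta q [real k * s - real j]))"
    unfolding qzeta_newton_identity_truncated[OF q]
    by (intro tendsto_sum tendsto_mult tendsto_const esym_qzeta_term_tendsto_mqzeta q assms(4) single)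
      auto
  from lhs rhs show ?thesis
    by (rule LIMSEQ_unique)
qed

end
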